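(* Fix $x\in\mathbb{C}$. Let $G_1$ and $G_2$ be two graphs of the same order and let $H$ be any graph. Then $G_1\vee H$ and $G_2 \vee H$ are cospectral with respect to $A+xD$ and with respect to $\bar A + x\bar D$ if and only if $G_1$ and $G_2$ are cospectral with respect to $A+xD$ and with respect to $\bar A+x\bar D$.
   Context: Graphs are finite and simple. For a graph, $A$ and $D$ denote its adjacency and (diagonal) degree matrices, and $\bar A$, $\bar D$ denote the adjacency and degree matrices of its complement. Two graphs are cospectral with respect to a matrix type (e.g., $A+xD$) if the corresponding matrices have the same multiset of eigenvalues. The join $G\vee H$ is the disjoint union of $G$ and $H$ together with all edges between a vertex of $G$ and a vertex of $H$. *)

theory Defs
  imports "Jordan_Normal_Form.Matrix" "Jordan_Normal_Form.Char_Poly"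
    "HOL-Computational_Algebra.Polynomial"
begin

text \<open>A finite simple graph of order n: vertex set {0..<n}, edge relation E,
  symmetric and irreflexive on the vertex set (values outside are irrelevant).\<close>
definition simple_graph :: "nat \<Rightarrow> (nat \<Rightarrow> nat \<Rightarrow> bool) \<Rightarrow> bool" where
  "simple_graph n E \<longleftrightarrow> (\<forall>i<n. \<forall>j<n. E i j = E j i) \<and> (\<forall>i<n. \<not> E i i)"

definition compl_graph :: "(nat \<Rightarrow> nat \<Rightarrow> bool) \<Rightarrow> nat \<Rightarrow> nat \<Rightarrow> bool" where
  "compl_graph E i j \<longleftrightarrow> i \<noteq> j \<and> \<not> E i j"

text \<open>Join of G (order n, vertices 0..<n) and H (order m, vertices n..<n+m).\<close>
definition graph_join :: "nat \<Rightarrow> (nat \<Rightarrow> nat \<Rightarrow> bool) \<Rightarrow> (nat \<Rightarrow> nat \<Rightarrow> bool) \<Rightarrow> nat \<Rightarrow> nat \<Rightarrow> bool" where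
  "graph_join n E F i j =
     (if i < n \<and> j < n then E i j
      else if n \<le> i \<and> n \<le> j then F (i - n) (j - n)
      else True)"

definition adj_mat :: "nat \<Rightarrow> (nat \<Rightarrow> nat \<Rightarrow> bool) \<Rightarrow> complex mat" where
  "adj_mat n E = mat n n (\<lambda>(i, j). if E i j then 1 else 0)"

definition degree :: "nat \<Rightarrow> (nat \<Rightarrow> nat \<Rightarrow> bool) \<Rightarrow> nat \<Rightarrow> nat" where
  "degree n E i = card {j. j < n \<and> E i j}"

definition deg_mat :: "nat \<Rightarrow> (nat \<Rightarrow> nat \<Rightarrow> bool) \<Rightarrow> complex mat" where
  "deg_mat n E = mat n n (\<lambda>(i, j). if i = j then of_nat (degree n E i) else 0)"

definition AxD_mat :: "complex \<Rightarrow> nat \<Rightarrow> (nat \<Rightarrow> nat \<Rightarrow> bool) \<Rightarrow> complex mat" where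
  "AxD_mat x n E = adj_mat n E + x \<cdot>\<^sub>m deg_mat n E"

definition spectrum_mset :: "complex mat \<Rightarrow> complex multiset" where
  "spectrum_mset M = proots (char_poly M)"

definition AxD_cospectral :: "complex \<Rightarrow> nat \<Rightarrow> (nat \<Rightarrow> nat \<Rightarrow> bool) \<Rightarrow> (nat \<Rightarrow> nat \<Rightarrow> bool) \<Rightarrow> bool" where
  "AxD_cospectral x n E F \<longleftrightarrow> spectrum_mset (AxD_mat x n E) = spectrum_mset (AxD_mat x n F)"

definition compl_AxD_cospectral :: "complex \<Rightarrow> nat \<Rightarrow> (nat \<Rightarrow> nat \<Rightarrow> bool) \<Rightarrow> (nat \<Rightarrow> nat \<Rightarrow> bool) \<Rightarrow> bool" where
  "compl_AxD_cospectral x n E F \<longleftrightarrow> AxD_cospectral x n (compl_graph E) (compl_graph F)"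

end

theory Submission
  imports Defs
begin

text \<open>
  Write \<open>M\<^sub>G = A + xD\<close> for a graph \<open>G\<close> of order \<open>n\<close>, \<open>J\<close> for all-ones matrices,
  \<open>\<phi>\<^sub>G\<close> for the characteristic polynomial of \<open>M\<^sub>G\<close> and \<open>\<psi>\<^sub>G\<close> for that of \<open>M\<^sub>G - J\<close>;
  cospectrality is equality of characteristic polynomials, since these split over \<open>\<complex>\<close>.

  For simple \<open>G\<close> the complement matrix is \<open>(x(n - 1) - 1)I - (M\<^sub>G - J)\<close>, so cospectrality
  of the complements means \<open>\<psi>\<^sub>G\<^sub>1 = \<psi>\<^sub>G\<^sub>2\<close>. The complement of \<open>G \<or> H\<close> is the disjoint union
  of the complements, whose characteristic polynomial is a product; cancelling the factor of
  \<open>H\<close> transfers the complement condition between the joins and the \<open>G\<^sub>i\<close>.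

  The matrix \<open>M\<^bsub>G \<or> H\<^esub>\<close> has blocks \<open>M\<^sub>G + xmI\<close>, \<open>J\<close>, \<open>J\<close>, \<open>M\<^sub>H + xnI\<close>. Schur complements and
  the matrix determinant lemma \<open>det (C + tJ) = det C (1 + t \<Sigma> C\<^sup>-\<^sup>1)\<close> give, for all \<open>\<lambda>\<close> outside
  finitely many roots, \<open>\<phi>\<^bsub>G \<or> H\<^esub> = \<phi>\<^sub>G \<psi>\<^sub>H + \<psi>\<^sub>G \<phi>\<^sub>H - \<psi>\<^sub>G \<psi>\<^sub>H\<close> at shifted arguments. Hence once
  \<open>\<psi>\<^sub>G\<^sub>1 = \<psi>\<^sub>G\<^sub>2\<close>, the two joins differ by \<open>(\<phi>\<^sub>G\<^sub>1 - \<phi>\<^sub>G\<^sub>2) \<psi>\<^sub>H\<close> with \<open>\<psi>\<^sub>H \<noteq> 0\<close>.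
\<close>

lemma poly_eqI_cofinite:
  fixes p q :: "'a::{idom,ring_char_0} poly"
  assumes "finite F" and "\<And>z. z \<notin> F \<Longrightarrow> poly p z = poly q z"
  shows "p = q"
proof (rule ccontr)
  assume "p \<noteq> q"
  then have "finite {z. poly (p - q) z = 0}" by (intro poly_roots_finite) simp
  moreover have "- F \<subseteq> {z. poly (p - q) z = 0}" using assms(2) by auto
  ultimately have "finite (- F)" by (rule finite_subset[rotated])
  then show False using finite_compl[OF assms(1)] infinite_UNIV_char_0 by blast
qed

lemma finite_roots_shift:
  fixes p :: "'a::idom poly"
  assumes "p \<noteq> 0"
  shows "finite {z. poly p (z - c) = 0}"
proof -
  have "{z. poly p (z - c) = 0} = (\<lambda>w. w + c) ` {w. poly p w = 0}"
    by (auto simp: image_iff) (metis diff_add_cancel)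
  then show ?thesis using poly_roots_finite[OF assms] by simp
qed

lemma inverse_mat_exists:
  fixes A :: "'a::field mat"
  assumes "A \<in> carrier_mat n n" and "det A \<noteq> 0"
  obtains Ai where "Ai \<in> carrier_mat n n" "A * Ai = 1\<^sub>m n" "Ai * A = 1\<^sub>m n"
  using det_non_zero_imp_unit[OF assms, of undefined] that unfolding Units_def ring_mat_def by auto

lemma add_diff_cancel_mat:
  fixes A :: "'a::ab_group_add mat"
  shows "A \<in> carrier_mat r c \<Longrightarrow> C \<in> carrier_mat r c \<Longrightarrow> A + (C - A) = C"
  by (intro eq_matI) auto

lemma det_four_block_mat_schur_upper_left:
  fixes B :: "'a::idom mat"
  assumes B: "B \<in> carrier_mat n n" and X: "X \<in> carrier_mat n m" and Y: "Y \<in> carrier_mat m n"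
    and C: "C \<in> carrier_mat m m" and Bi: "Bi \<in> carrier_mat n n" and inv: "B * Bi = 1\<^sub>m n"
  shows "det (four_block_mat B X Y C) = det B * det (C - Y * Bi * X)"
proof -
  let ?S = "C - Y * Bi * X"
  have S: "?S \<in> carrier_mat m m" using Y Bi X C by auto
  have L: "four_block_mat B (0\<^sub>m n m) Y (1\<^sub>m m) \<in> carrier_mat (n + m) (n + m)"
    using B Y by auto
  have R: "four_block_mat (1\<^sub>m n) (Bi * X) (0\<^sub>m m n) ?S \<in> carrier_mat (n + m) (n + m)"
    using S by auto
  have "B * (Bi * X) = X"
    using assoc_mult_mat[OF B Bi X] X by (simp add: inv)
  moreover have "Y * (Bi * X) + ?S = C"
    using assoc_mult_mat[OF Y Bi X] add_diff_cancel_mat[OF _ C, of "Y * Bi * X"] Y Bi X by simp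
  ultimately have "four_block_mat B X Y C
      = four_block_mat B (0\<^sub>m n m) Y (1\<^sub>m m) * four_block_mat (1\<^sub>m n) (Bi * X) (0\<^sub>m m n) ?S"
    using mult_four_block_mat[OF B zero_carrier_mat Y one_carrier_mat one_carrier_mat _ zero_carrier_mat S, of "Bi * X"]
      B X Y Bi S by simp
  also have "det \<dots> = det B * det ?S"
    using det_mult[OF L R] det_four_block_mat_upper_right_zero[OF B refl Y one_carrier_mat]
      det_four_block_mat_lower_left_zero[OF one_carrier_mat _ refl S, of "Bi * X"] Bi X by simp
  finally show ?thesis .
qed

lemma det_four_block_mat_schur_lower_right:
  fixes C :: "'a::idom mat"
  assumes B: "B \<in> carrier_mat n n" and X: "X \<in> carrier_mat n m" and Y: "Y \<in> carrier_mat m n"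
    and C: "C \<in> carrier_mat m m" and Ci: "Ci \<in> carrier_mat m m" and inv: "Ci * C = 1\<^sub>m m"
  shows "det (four_block_mat B X Y C) = det (B - X * Ci * Y) * det C"
proof -
  let ?S = "B - X * Ci * Y"
  have S: "?S \<in> carrier_mat n n" using Y Ci X B by auto
  have L: "four_block_mat (1\<^sub>m n) (X * Ci) (0\<^sub>m m n) (1\<^sub>m m) \<in> carrier_mat (n + m) (n + m)"
    by auto
  have R: "four_block_mat ?S (0\<^sub>m n m) Y C \<in> carrier_mat (n + m) (n + m)"
    using S C by auto
  have "X * Ci * C = X"
    using assoc_mult_mat[OF X Ci C] X by (simp add: inv)
  moreover have "?S + X * Ci * Y = B"
    using add_diff_cancel_mat[OF _ B, of "X * Ci * Y"] comm_add_mat[OF S, of "X * Ci * Y"] X Ci Y by simp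
  ultimately have "four_block_mat B X Y C
      = four_block_mat (1\<^sub>m n) (X * Ci) (0\<^sub>m m n) (1\<^sub>m m) * four_block_mat ?S (0\<^sub>m n m) Y C"
    using mult_four_block_mat[OF one_carrier_mat _ zero_carrier_mat one_carrier_mat S zero_carrier_mat Y C, of "X * Ci"]
      X Y C Ci S by simp
  also have "det \<dots> = det ?S * det C"
    using det_mult[OF L R] det_four_block_mat_upper_right_zero[OF S refl Y C]
      det_four_block_mat_lower_left_zero[OF one_carrier_mat _ refl one_carrier_mat, of "X * Ci"] X Ci by simp
  finally show ?thesis .
qed

definition sum_entries :: "'a::comm_monoid_add mat \<Rightarrow> 'a" where
  "sum_entries A = (\<Sum>i<dim_row A. \<Sum>j<dim_col A. A $$ (i, j))"

lemma const_mat_mult_mult_const_mat: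
  fixes P :: "'a::comm_semiring_1 mat"
  assumes P: "P \<in> carrier_mat n k"
  shows "mat r n (\<lambda>_. a) * P * mat k c (\<lambda>_. b) = mat r c (\<lambda>_. a * b * sum_entries P)"
proof (rule eq_matI)
  fix i j assume i: "i < dim_row (mat r c (\<lambda>_. a * b * sum_entries P))"
    and j: "j < dim_col (mat r c (\<lambda>_. a * b * sum_entries P))"
  have "(mat r n (\<lambda>_. a) * P * mat k c (\<lambda>_. b)) $$ (i, j) = (\<Sum>q<k. (\<Sum>p<n. a * P $$ (p, q)) * b)"
    using i j P by (simp add: scalar_prod_def atLeast0LessThan)
  also have "\<dots> = a * b * (\<Sum>p<n. \<Sum>q<k. P $$ (p, q))"
    by (simp add: sum_distrib_left sum_distrib_right mult_ac sum.swap[of _ "{..<n}"])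
  finally show "(mat r n (\<lambda>_. a) * P * mat k c (\<lambda>_. b)) $$ (i, j) = mat r c (\<lambda>_. a * b * sum_entries P) $$ (i, j)"
    using i j P by (simp add: sum_entries_def)
qed (use P in auto)

lemma det_add_const_mat:
  fixes C :: "'a::idom mat"
  assumes C: "C \<in> carrier_mat m m" and Ci: "Ci \<in> carrier_mat m m" and inv: "C * Ci = 1\<^sub>m m"
  shows "det (C + mat m m (\<lambda>_. t)) = det C * (1 + t * sum_entries Ci)"
proof -
  \<comment> \<open>Compare the two Schur complements of a bordered matrix.\<close>
  let ?Q = "four_block_mat C (mat m 1 (\<lambda>_. 1)) (mat 1 m (\<lambda>_. - t)) (1\<^sub>m 1)"
  have "det ?Q = det (C - mat m 1 (\<lambda>_. 1) * 1\<^sub>m 1 * mat 1 m (\<lambda>_. - t))"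
    using det_four_block_mat_schur_lower_right[OF C _ _ one_carrier_mat one_carrier_mat] by simp
  also have "C - mat m 1 (\<lambda>_. 1) * 1\<^sub>m 1 * mat 1 m (\<lambda>_. - t) = C + mat m m (\<lambda>_. t)"
    using C by (intro eq_matI) (auto simp: scalar_prod_def)
  finally have "det ?Q = det (C + mat m m (\<lambda>_. t))" .
  moreover have "det ?Q = det C * det (1\<^sub>m 1 - mat 1 m (\<lambda>_. - t) * Ci * mat m 1 (\<lambda>_. 1))"
    by (rule det_four_block_mat_schur_upper_left[OF C _ _ one_carrier_mat Ci inv]) auto
  moreover have "1\<^sub>m 1 - mat 1 m (\<lambda>_. - t) * Ci * mat m 1 (\<lambda>_. 1) = (1 + t * sum_entries Ci) \<cdot>\<^sub>m 1\<^sub>m 1"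
    using const_mat_mult_mult_const_mat[OF Ci, of 1 "- t" 1 1] by (intro eq_matI) auto
  ultimately show ?thesis by simp
qed

lemma det_four_block_mat_minus_ones:
  fixes B C :: "'a::field mat"
  assumes B: "B \<in> carrier_mat n n" and C: "C \<in> carrier_mat m m"
    and dB: "det B \<noteq> 0" and dC: "det C \<noteq> 0"
  shows "det (four_block_mat B (mat n m (\<lambda>_. -1)) (mat m n (\<lambda>_. -1)) C)
    = det B * det (C + mat m m (\<lambda>_. 1)) + det (B + mat n n (\<lambda>_. 1)) * det C
      - det (B + mat n n (\<lambda>_. 1)) * det (C + mat m m (\<lambda>_. 1))"
proof -
  obtain Bi where Bi: "Bi \<in> carrier_mat n n" "B * Bi = 1\<^sub>m n"
    using inverse_mat_exists[OF B dB] by blast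
  obtain Ci where Ci: "Ci \<in> carrier_mat m m" "C * Ci = 1\<^sub>m m"
    using inverse_mat_exists[OF C dC] by blast
  have "det (four_block_mat B (mat n m (\<lambda>_. -1)) (mat m n (\<lambda>_. -1)) C)
      = det B * det (C - mat m n (\<lambda>_. -1) * Bi * mat n m (\<lambda>_. -1))"
    by (rule det_four_block_mat_schur_upper_left[OF B _ _ C Bi]) auto
  also have "C - mat m n (\<lambda>_. -1) * Bi * mat n m (\<lambda>_. -1) = C + mat m m (\<lambda>_. - sum_entries Bi)"
    using const_mat_mult_mult_const_mat[OF Bi(1), of m "-1" m "-1"] C by (intro eq_matI) auto
  also have "det \<dots> = det C * (1 - sum_entries Bi * sum_entries Ci)"
    using det_add_const_mat[OF C Ci, of "- sum_entries Bi"] by simp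
  finally show ?thesis
    using det_add_const_mat[OF C Ci, of 1] det_add_const_mat[OF B Bi, of 1]
    by (simp add: algebra_simps)
qed

lemma poly_char_poly:
  assumes "A \<in> carrier_mat n n"
  shows "poly (char_poly A) l = det (l \<cdot>\<^sub>m 1\<^sub>m n - A)"
  unfolding char_poly_def
  by (rule poly_det_cong[of _ n]) (use assms in \<open>auto simp: char_poly_matrix_def\<close>)

lemma char_poly_nonzero: "A \<in> carrier_mat n n \<Longrightarrow> char_poly A \<noteq> 0"
  using degree_monic_char_poly[of A n] by auto

lemma spectrum_mset_eq_iff:
  fixes A B :: "complex mat"
  assumes "A \<in> carrier_mat n n" and "B \<in> carrier_mat m m"
  shows "spectrum_mset A = spectrum_mset B \<longleftrightarrow> char_poly A = char_poly B"
proof -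
  have "lead_coeff (char_poly A) = 1" "lead_coeff (char_poly B) = 1"
    using degree_monic_char_poly[OF assms(1)] degree_monic_char_poly[OF assms(2)] by auto
  then show ?thesis
    using complex_poly_decompose_multiset[of "char_poly A"] complex_poly_decompose_multiset[of "char_poly B"]
    unfolding spectrum_mset_def by metis
qed

lemma poly_char_poly_add_scalar:
  assumes "A \<in> carrier_mat n n"
  shows "poly (char_poly (A + a \<cdot>\<^sub>m 1\<^sub>m n)) l = poly (char_poly A) (l - a)"
proof -
  have "l \<cdot>\<^sub>m 1\<^sub>m n - (A + a \<cdot>\<^sub>m 1\<^sub>m n) = (l - a) \<cdot>\<^sub>m 1\<^sub>m n - A"
    by (rule eq_matI) (use assms in \<open>auto simp: algebra_simps\<close>)
  then show ?thesis
    using poly_char_poly[of "A + a \<cdot>\<^sub>m 1\<^sub>m n" n l] poly_char_poly[OF assms, of "l - a"] assms by simp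
qed

lemma poly_char_poly_scalar_minus:
  assumes "A \<in> carrier_mat n n"
  shows "poly (char_poly (c \<cdot>\<^sub>m 1\<^sub>m n - A)) l = (-1) ^ n * poly (char_poly A) (c - l)"
proof -
  have "l \<cdot>\<^sub>m 1\<^sub>m n - (c \<cdot>\<^sub>m 1\<^sub>m n - A) = (-1) \<cdot>\<^sub>m ((c - l) \<cdot>\<^sub>m 1\<^sub>m n - A)"
    by (rule eq_matI) (use assms in \<open>auto simp: algebra_simps\<close>)
  then show ?thesis
    using poly_char_poly[OF minus_carrier_mat[OF assms, of "c \<cdot>\<^sub>m 1\<^sub>m n"], of l] poly_char_poly[OF assms, of "c - l"]
      carrier_matD[OF assms] by simp
qed

lemma char_matrix_four_block_mat:
  fixes A :: "'a::comm_ring_1 mat"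
  assumes "A \<in> carrier_mat n n" "B \<in> carrier_mat n m" "C \<in> carrier_mat m n" "D \<in> carrier_mat m m"
  shows "l \<cdot>\<^sub>m 1\<^sub>m (n + m) - four_block_mat A B C D
    = four_block_mat (l \<cdot>\<^sub>m 1\<^sub>m n - A) (- B) (- C) (l \<cdot>\<^sub>m 1\<^sub>m m - D)"
  by (rule eq_matI) (use assms in auto)

lemma char_poly_four_block_diag:
  fixes A :: "'a::idom mat"
  assumes A: "A \<in> carrier_mat n n" and D: "D \<in> carrier_mat m m"
  shows "char_poly (four_block_mat A (0\<^sub>m n m) (0\<^sub>m m n) D) = char_poly A * char_poly D"
proof -
  have "char_poly_matrix (four_block_mat A (0\<^sub>m n m) (0\<^sub>m m n) D)
      = four_block_mat (char_poly_matrix A) (0\<^sub>m n m) (0\<^sub>m m n) (char_poly_matrix D)"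
    by (rule eq_matI) (use A D in \<open>auto simp: char_poly_matrix_def\<close>)
  then show ?thesis
    unfolding char_poly_def
    by (simp add: det_four_block_mat_upper_right_zero[OF char_poly_matrix_closed[OF A] refl _
          char_poly_matrix_closed[OF D]])
qed

lemma poly_char_poly_four_block_ones:
  fixes A :: "'a::field mat"
  assumes A: "A \<in> carrier_mat n n" and D: "D \<in> carrier_mat m m"
    and "poly (char_poly A) l \<noteq> 0" and "poly (char_poly D) l \<noteq> 0"
  shows "poly (char_poly (four_block_mat A (mat n m (\<lambda>_. 1)) (mat m n (\<lambda>_. 1)) D)) l
    = poly (char_poly A) l * poly (char_poly (D - mat m m (\<lambda>_. 1))) l
      + poly (char_poly (A - mat n n (\<lambda>_. 1))) l * poly (char_poly D) l
      - poly (char_poly (A - mat n n (\<lambda>_. 1))) l * poly (char_poly (D - mat m m (\<lambda>_. 1))) l"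
proof -
  have shift: "l \<cdot>\<^sub>m 1\<^sub>m k - M + mat k k (\<lambda>_. 1) = l \<cdot>\<^sub>m 1\<^sub>m k - (M - mat k k (\<lambda>_. 1))"
    if "M \<in> carrier_mat k k" for M :: "'a mat" and k
    by (rule eq_matI) (use that in auto)
  have "l \<cdot>\<^sub>m 1\<^sub>m (n + m) - four_block_mat A (mat n m (\<lambda>_. 1)) (mat m n (\<lambda>_. 1)) D
      = four_block_mat (l \<cdot>\<^sub>m 1\<^sub>m n - A) (mat n m (\<lambda>_. -1)) (mat m n (\<lambda>_. -1)) (l \<cdot>\<^sub>m 1\<^sub>m m - D)"
    using char_matrix_four_block_mat[OF A _ _ D] by (auto intro!: cong_four_block_mat)
  then show ?thesis
    using det_four_block_mat_minus_ones[of "l \<cdot>\<^sub>m 1\<^sub>m n - A" n "l \<cdot>\<^sub>m 1\<^sub>m m - D" m] assms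
    by (simp add: poly_char_poly[OF four_block_carrier_mat[OF A D]] poly_char_poly[OF A]
        poly_char_poly[OF D] poly_char_poly[OF minus_carrier_mat[OF mat_carrier]] shift minus_carrier_mat)
qed

lemma dim_AxD_mat [simp]: "dim_row (AxD_mat x n E) = n" "dim_col (AxD_mat x n E) = n"
  unfolding AxD_mat_def adj_mat_def deg_mat_def by auto

lemma AxD_mat_carrier [simp]: "AxD_mat x n E \<in> carrier_mat n n"
  by (rule carrier_matI) simp_all

lemma index_AxD_mat:
  "i < n \<Longrightarrow> j < n \<Longrightarrow> AxD_mat x n E $$ (i, j)
    = (if E i j then 1 else 0) + (if i = j then x * of_nat (degree n E i) else 0)"
  unfolding AxD_mat_def adj_mat_def deg_mat_def by auto

lemma mem_image_add_nat: "(j::nat) \<in> (\<lambda>k. k + n) ` S \<longleftrightarrow> n \<le> j \<and> j - n \<in> S"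
  by (auto simp: image_iff intro!: bexI[of _ "j - n"])

lemma degree_graph_join_left:
  assumes "i < n"
  shows "degree (n + m) (graph_join n E H) i = degree n E i + m"
proof -
  have "{j. j < n + m \<and> graph_join n E H i j} = {j. j < n \<and> E i j} \<union> {n..<n + m}"
    using assms by (auto simp: graph_join_def)
  moreover have "card ({j. j < n \<and> E i j} \<union> {n..<n + m}) = card {j. j < n \<and> E i j} + m"
    by (subst card_Un_disjoint) auto
  ultimately show ?thesis unfolding degree_def by simp
qed

lemma degree_graph_join_right:
  assumes "n \<le> i"
  shows "degree (n + m) (graph_join n E H) i = n + degree m H (i - n)"
proof -
  have "{j. j < n + m \<and> graph_join n E H i j} = {0..<n} \<union> (\<lambda>j. j + n) ` {j. j < m \<and> H (i - n) j}"
    using assms by (auto simp: graph_join_def mem_image_add_nat)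
  moreover have "card ({0..<n} \<union> (\<lambda>j. j + n) ` {j. j < m \<and> H (i - n) j}) = n + card {j. j < m \<and> H (i - n) j}"
    by (subst card_Un_disjoint) (auto simp: card_image inj_on_def)
  ultimately show ?thesis unfolding degree_def by simp
qed

lemma degree_compl_graph_join_left:
  assumes "i < n"
  shows "degree (n + m) (compl_graph (graph_join n E H)) i = degree n (compl_graph E) i"
proof -
  have "{j. j < n + m \<and> compl_graph (graph_join n E H) i j} = {j. j < n \<and> compl_graph E i j}"
    using assms by (auto simp: graph_join_def compl_graph_def)
  then show ?thesis unfolding degree_def by simp
qed

lemma degree_compl_graph_join_right:
  assumes "n \<le> i"
  shows "degree (n + m) (compl_graph (graph_join n E H)) i = degree m (compl_graph H) (i - n)"
proof -
  have "{j. j < n + m \<and> compl_graph (graph_join n E H) i j}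
      = (\<lambda>j. j + n) ` {j. j < m \<and> compl_graph H (i - n) j}"
    using assms by (auto simp: graph_join_def compl_graph_def mem_image_add_nat)
  then show ?thesis unfolding degree_def by (simp add: card_image inj_on_def)
qed

lemma degree_compl_graph:
  assumes "simple_graph n E" and i: "i < n"
  shows "degree n (compl_graph E) i + degree n E i + 1 = n"
proof -
  let ?N = "{j. j < n \<and> E i j}"
  have "\<not> E i i" using assms unfolding simple_graph_def by blast
  then have card_N: "card (insert i ?N) = card ?N + 1" by simp
  have "{j. j < n \<and> compl_graph E i j} = {0..<n} - insert i ?N"
    by (auto simp: compl_graph_def)
  moreover have "card ({0..<n} - insert i ?N) = n - card (insert i ?N)"
    using i by (subst card_Diff_subset) auto
  moreover have "card (insert i ?N) \<le> card {0..<n}"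
    by (rule card_mono) (use i in auto)
  ultimately show ?thesis unfolding degree_def using card_N by simp
qed

lemma AxD_mat_graph_join:
  "AxD_mat x (n + m) (graph_join n E H) =
    four_block_mat (AxD_mat x n E + (x * of_nat m) \<cdot>\<^sub>m 1\<^sub>m n) (mat n m (\<lambda>_. 1))
      (mat m n (\<lambda>_. 1)) (AxD_mat x m H + (x * of_nat n) \<cdot>\<^sub>m 1\<^sub>m m)" (is "?L = ?R")
proof (rule eq_matI)
  fix i j assume "i < dim_row ?R" and "j < dim_col ?R"
  then have i: "i < n + m" and j: "j < n + m" by auto
  consider "i < n" "j < n" | "i < n" "n \<le> j" | "n \<le> i" "j < n" | "n \<le> i" "n \<le> j" by linarith
  then show "?L $$ (i, j) = ?R $$ (i, j)"
  proof cases
    case 4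
    then have "i - n = j - n \<longleftrightarrow> i = j" by auto
    with 4 i j show ?thesis
      by (simp add: index_AxD_mat degree_graph_join_right graph_join_def; simp add: algebra_simps)
  qed (use i j in \<open>simp add: index_AxD_mat degree_graph_join_left graph_join_def; simp add: algebra_simps\<close>)+
qed auto

lemma AxD_mat_compl_graph_join:
  "AxD_mat x (n + m) (compl_graph (graph_join n E H)) =
    four_block_mat (AxD_mat x n (compl_graph E)) (0\<^sub>m n m) (0\<^sub>m m n) (AxD_mat x m (compl_graph H))"
  (is "?L = ?R")
proof (rule eq_matI)
  fix i j assume "i < dim_row ?R" and "j < dim_col ?R"
  then have i: "i < n + m" and j: "j < n + m" by auto
  consider "i < n" "j < n" | "i < n" "n \<le> j" | "n \<le> i" "j < n" | "n \<le> i" "n \<le> j" by linarith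
  then show "?L $$ (i, j) = ?R $$ (i, j)"
  proof cases
    case 4
    then have "i - n = j - n \<longleftrightarrow> i = j" by auto
    with 4 i j show ?thesis
      by (auto simp: index_AxD_mat degree_compl_graph_join_right graph_join_def compl_graph_def)
  qed (use i j in \<open>auto simp: index_AxD_mat degree_compl_graph_join_left graph_join_def compl_graph_def\<close>)
qed auto

lemma AxD_mat_compl_graph:
  assumes "simple_graph n E"
  shows "AxD_mat x n (compl_graph E)
    = (x * (of_nat n - 1) - 1) \<cdot>\<^sub>m 1\<^sub>m n - (AxD_mat x n E - mat n n (\<lambda>_. 1))" (is "?L = ?R")
proof (rule eq_matI)
  fix i j assume "i < dim_row ?R" and "j < dim_col ?R"
  then have i: "i < n" and j: "j < n" by auto
  have irrefl: "\<not> E k k" if "k < n" for k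
    using assms that unfolding simple_graph_def by blast
  have deg: "of_nat (degree n (compl_graph E) k) = (of_nat n - 1 - of_nat (degree n E k) :: complex)"
    if "k < n" for k
    using arg_cong[OF degree_compl_graph[OF assms that], of "of_nat :: nat \<Rightarrow> complex"]
    by (simp add: algebra_simps)
  show "?L $$ (i, j) = ?R $$ (i, j)"
    using i j irrefl by (simp add: index_AxD_mat compl_graph_def deg; simp add: algebra_simps)
qed auto

lemma AxD_cospectral_iff_char_poly:
  "AxD_cospectral x n E F \<longleftrightarrow> char_poly (AxD_mat x n E) = char_poly (AxD_mat x n F)"
  unfolding AxD_cospectral_def by (rule spectrum_mset_eq_iff[OF AxD_mat_carrier AxD_mat_carrier])

lemma compl_AxD_cospectral_iff:
  assumes "simple_graph n E" and "simple_graph n F"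
  shows "compl_AxD_cospectral x n E F \<longleftrightarrow>
    char_poly (AxD_mat x n E - mat n n (\<lambda>_. 1)) = char_poly (AxD_mat x n F - mat n n (\<lambda>_. 1))"
proof -
  define c where "c = x * (of_nat n - 1) - 1"
  let ?QE = "char_poly (AxD_mat x n E - mat n n (\<lambda>_. 1))"
    and ?QF = "char_poly (AxD_mat x n F - mat n n (\<lambda>_. 1))"
  have char_compl: "poly (char_poly (AxD_mat x n (compl_graph G)))
      = (\<lambda>l. (-1) ^ n * poly (char_poly (AxD_mat x n G - mat n n (\<lambda>_. 1))) (c - l))"
    if "simple_graph n G" for G
    unfolding AxD_mat_compl_graph[OF that] c_def
    by (rule ext, rule poly_char_poly_scalar_minus) (simp add: minus_carrier_mat)
  have "compl_AxD_cospectral x n E F \<longleftrightarrow>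
      (\<lambda>l. (-1) ^ n * poly ?QE (c - l)) = (\<lambda>l. (-1) ^ n * poly ?QF (c - l))"
    unfolding compl_AxD_cospectral_def AxD_cospectral_iff_char_poly poly_eq_poly_eq_iff[symmetric]
      char_compl[OF assms(1)] char_compl[OF assms(2)] ..
  also have "\<dots> \<longleftrightarrow> poly ?QE = poly ?QF"
  proof
    assume eq: "(\<lambda>l. (-1) ^ n * poly ?QE (c - l)) = (\<lambda>l. (-1) ^ n * poly ?QF (c - l))"
    show "poly ?QE = poly ?QF"
    proof
      fix v show "poly ?QE v = poly ?QF v" using fun_cong[OF eq, of "c - v"] by simp
    qed
  qed simp
  finally show ?thesis unfolding poly_eq_poly_eq_iff .
qed

lemma compl_AxD_cospectral_graph_join_iff:
  "compl_AxD_cospectral x (n + m) (graph_join n E1 H) (graph_join n E2 H) \<longleftrightarrow>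
    compl_AxD_cospectral x n E1 E2"
  using char_poly_nonzero[OF AxD_mat_carrier[of x m "compl_graph H"]]
  by (simp add: compl_AxD_cospectral_def AxD_cospectral_iff_char_poly AxD_mat_compl_graph_join
      char_poly_four_block_diag)

lemma poly_char_poly_AxD_graph_join:
  assumes "poly (char_poly (AxD_mat x n E)) (l - x * of_nat m) \<noteq> 0"
    and "poly (char_poly (AxD_mat x m H)) (l - x * of_nat n) \<noteq> 0"
  shows "poly (char_poly (AxD_mat x (n + m) (graph_join n E H))) l
    = poly (char_poly (AxD_mat x n E)) (l - x * of_nat m)
        * poly (char_poly (AxD_mat x m H - mat m m (\<lambda>_. 1))) (l - x * of_nat n)
      + poly (char_poly (AxD_mat x n E - mat n n (\<lambda>_. 1))) (l - x * of_nat m)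
        * poly (char_poly (AxD_mat x m H)) (l - x * of_nat n)
      - poly (char_poly (AxD_mat x n E - mat n n (\<lambda>_. 1))) (l - x * of_nat m)
        * poly (char_poly (AxD_mat x m H - mat m m (\<lambda>_. 1))) (l - x * of_nat n)"
proof -
  have shift: "M + a \<cdot>\<^sub>m 1\<^sub>m k - mat k k (\<lambda>_. 1) = (M - mat k k (\<lambda>_. 1)) + a \<cdot>\<^sub>m 1\<^sub>m k"
    if "M \<in> carrier_mat k k" for M :: "complex mat" and a k
    by (rule eq_matI) (use that in auto)
  show ?thesis
    unfolding AxD_mat_graph_join
    using poly_char_poly_four_block_ones[of "AxD_mat x n E + (x * of_nat m) \<cdot>\<^sub>m 1\<^sub>m n" n
        "AxD_mat x m H + (x * of_nat n) \<cdot>\<^sub>m 1\<^sub>m m" m l] assms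
    by (simp add: poly_char_poly_add_scalar shift minus_carrier_mat)
qed

lemma AxD_cospectral_graph_join_iff:
  assumes "char_poly (AxD_mat x n E1 - mat n n (\<lambda>_. 1)) = char_poly (AxD_mat x n E2 - mat n n (\<lambda>_. 1))"
  shows "AxD_cospectral x (n + m) (graph_join n E1 H) (graph_join n E2 H) \<longleftrightarrow> AxD_cospectral x n E1 E2"
proof -
  define a b where "a = x * of_nat m" and "b = x * of_nat n"
  define P1 P2 PH QH where "P1 = char_poly (AxD_mat x n E1)" and "P2 = char_poly (AxD_mat x n E2)"
    and "PH = char_poly (AxD_mat x m H)" and "QH = char_poly (AxD_mat x m H - mat m m (\<lambda>_. 1))"
  define J1 J2 where "J1 = char_poly (AxD_mat x (n + m) (graph_join n E1 H))"
    and "J2 = char_poly (AxD_mat x (n + m) (graph_join n E2 H))"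
  have nonzero: "P1 \<noteq> 0" "P2 \<noteq> 0" "PH \<noteq> 0" "QH \<noteq> 0"
    using char_poly_nonzero[OF AxD_mat_carrier] char_poly_nonzero[OF minus_carrier_mat[OF mat_carrier]]
    unfolding P1_def P2_def PH_def QH_def by blast+
  have diff: "poly J1 l - poly J2 l = (poly P1 (l - a) - poly P2 (l - a)) * poly QH (l - b)"
    if "poly P1 (l - a) \<noteq> 0" "poly P2 (l - a) \<noteq> 0" "poly PH (l - b) \<noteq> 0" for l
    using that unfolding a_def b_def P1_def P2_def PH_def QH_def J1_def J2_def
    by (simp only: poly_char_poly_AxD_graph_join assms not_False_eq_True) (simp add: algebra_simps)
  have "J1 = J2 \<longleftrightarrow> P1 = P2"
  proof
    assume "J1 = J2"
    let ?F = "{z. poly P1 z = 0} \<union> {z. poly P2 z = 0}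
      \<union> {z. poly PH (z - (b - a)) = 0} \<union> {z. poly QH (z - (b - a)) = 0}"
    show "P1 = P2"
    proof (rule poly_eqI_cofinite)
      show "finite ?F" using nonzero by (simp add: poly_roots_finite finite_roots_shift)
      fix z assume "z \<notin> ?F"
      then show "poly P1 z = poly P2 z" using diff[of "z + a"] \<open>J1 = J2\<close> by (simp add: algebra_simps)
    qed
  next
    assume "P1 = P2"
    let ?F = "{l. poly P1 (l - a) = 0} \<union> {l. poly PH (l - b) = 0}"
    show "J1 = J2"
    proof (rule poly_eqI_cofinite)
      show "finite ?F" using nonzero by (simp add: finite_roots_shift)
      fix l assume "l \<notin> ?F"
      then show "poly J1 l = poly J2 l" using diff[of l] \<open>P1 = P2\<close> by simp
    qed
  qed
  then show ?thesis unfolding AxD_cospectral_iff_char_poly J1_def J2_def P1_def P2_def .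
qed

theorem theorem3p2:
  fixes x :: complex and n m :: nat and E1 E2 H :: "nat \<Rightarrow> nat \<Rightarrow> bool"
  assumes "simple_graph n E1" and "simple_graph n E2" and "simple_graph m H"
  shows "(AxD_cospectral x (n + m) (graph_join n E1 H) (graph_join n E2 H) \<and>
          compl_AxD_cospectral x (n + m) (graph_join n E1 H) (graph_join n E2 H))
     \<longleftrightarrow> (AxD_cospectral x n E1 E2 \<and> compl_AxD_cospectral x n E1 E2)"
  using compl_AxD_cospectral_iff[OF assms(1,2)] compl_AxD_cospectral_graph_join_iff
    AxD_cospectral_graph_join_iff by blast

end
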